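(* Let $N=2m+1$ be an odd integer with $N\ge3$. There exist $\varphi,\psi\in\mathbb{C}^N$ such that there is no $c\in\mathbb{C}$ with $|c|=1$ and $\psi=c\varphi$, while for all $k=0,\ldots,2N-3$, $$\Big|P_\varphi\Big(\tfrac{k}{2N-2}\Big)\Big|=\Big|P_\psi\Big(\tfrac{k}{2N-2}\Big)\Big|\quad\text{and}\quad\Big|P_\varphi'\Big(\tfrac{k}{2N-2}\Big)\Big|=\Big|P_\psi'\Big(\tfrac{k}{2N-2}\Big)\Big|.$$
   Context: For $\psi=(\psi_0,\ldots,\psi_{N-1})\in\mathbb{C}^N$, $P_\psi(x)=\sum_{j=0}^{N-1}\psi_je^{2i\pi jx}$ for $x\in\mathbb{R}$, and $P_\psi'$ denotes its derivative in $x$. *)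

theory Defs
  imports "HOL-Analysis.Analysis"
begin

text \<open>A vector psi in C^N is represented as a function nat => complex, of which
only the entries psi 0, ..., psi (N-1) are relevant.
P_psi(x) = sum_{j<N} psi_j exp(2 i pi j x).\<close>

definition trigP :: "nat \<Rightarrow> (nat \<Rightarrow> complex) \<Rightarrow> real \<Rightarrow> complex" where
  "trigP N \<psi> x = (\<Sum>j<N. \<psi> j * exp (2 * \<i> * of_real pi * of_nat j * of_real x))"

end

theory Submission
  imports Defs
begin

text \<open>Take \<open>\<phi> = e\<^sub>0 + \<i> e\<^sub>M\<close> and \<open>\<psi> = e\<^sub>0 - \<i> e\<^sub>M\<close> with \<open>M = N - 1\<close>, so that
  \<open>P\<^sub>\<phi>(x) = 1 + \<i> e(Mx)\<close> and \<open>P\<^sub>\<psi>(x) = 1 - \<i> e(Mx)\<close>. Both derivatives have the constant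
  modulus \<open>2\<pi>M\<close>, and at the sample points \<open>x = k/(2M)\<close> the exponential \<open>e(Mx) = (-1)\<^sup>k\<close>
  is real, so \<open>P\<^sub>\<psi>(x)\<close> is the complex conjugate of \<open>P\<^sub>\<phi>(x)\<close>.\<close>

definition one_plus_monom :: "nat \<Rightarrow> complex \<Rightarrow> nat \<Rightarrow> complex" where
  "one_plus_monom M a j = (if j = 0 then 1 else if j = M then a else 0)"

lemma trigP_one_plus_monom:
  assumes "0 < M" "M < N"
  shows "trigP N (one_plus_monom M a) =
           (\<lambda>x. 1 + a * exp (2 * \<i> * of_real pi * of_nat M * of_real x))"
proof
  fix x
  have "trigP N (one_plus_monom M a) x =
          (\<Sum>j<N. (if j = 0 then 1 else 0) +
                  (if j = M then a * exp (2 * \<i> * of_real pi * of_nat M * of_real x) else 0))"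
    unfolding trigP_def one_plus_monom_def using assms by (intro sum.cong) auto
  also have "\<dots> = 1 + a * exp (2 * \<i> * of_real pi * of_nat M * of_real x)"
    using assms by (simp add: sum.distrib)
  finally show "trigP N (one_plus_monom M a) x = \<dots>" .
qed

lemma one_plus_monom_not_unimodular_multiple:
  assumes "0 < M" "M < N" "a \<noteq> b"
  shows "\<not> (\<exists>c. cmod c = 1 \<and> (\<forall>j<N. one_plus_monom M b j = c * one_plus_monom M a j))"
proof
  assume "\<exists>c. cmod c = 1 \<and> (\<forall>j<N. one_plus_monom M b j = c * one_plus_monom M a j)"
  then obtain c where c: "\<forall>j<N. one_plus_monom M b j = c * one_plus_monom M a j" by blast
  from c[rule_format, of 0] have "c = 1" using assms by (simp add: one_plus_monom_def)
  with c[rule_format, of M] assms show False by (simp add: one_plus_monom_def)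
qed

lemma norm_vector_derivative_one_plus_exp:
  "norm (vector_derivative (\<lambda>x. 1 + a * exp (2 * \<i> * of_real pi * of_nat M * of_real x))
           (at (t::real))) = cmod a * (2 * pi * M)"
proof -
  let ?c = "2 * \<i> * of_real pi * of_nat M :: complex"
  have "((\<lambda>x. 1 + a * exp (?c * of_real x)) has_vector_derivative
          a * (exp (?c * of_real t) * ?c)) (at t)"
    by (rule has_vector_derivative_real_field derivative_eq_intros refl)+ simp_all
  then have "vector_derivative (\<lambda>x. 1 + a * exp (?c * of_real x)) (at t) =
               a * (exp (?c * of_real t) * ?c)"
    by (rule vector_derivative_at)
  moreover have "cmod (exp (?c * of_real t)) = 1"
    by (simp add: norm_exp_eq_Re)
  moreover have "cmod ?c = 2 * pi * M"
    by (simp add: norm_mult)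
  ultimately show ?thesis
    by (simp add: norm_mult)
qed

lemma exp_at_half_period_multiple:
  assumes "0 < M"
  shows "exp (2 * \<i> * of_real pi * of_nat M * of_real (real k / real (2 * M))) = (-1) ^ k"
proof -
  have "2 * \<i> * of_real pi * of_nat M * of_real (real k / real (2 * M)) = of_nat k * (\<i> * pi)"
    using assms by (simp add: field_simps)
  then show ?thesis
    by (simp add: exp_of_nat_mult)
qed

lemma cmod_one_plus_real_cnj:
  "cmod (1 + a * of_real r) = cmod (1 + cnj a * of_real r)"
proof -
  have "1 + cnj a * of_real r = cnj (1 + a * of_real r)"
    by simp
  then show ?thesis
    by (simp only: complex_mod_cnj)
qed

theorem mainTheorem11:
  fixes N m :: nat
  assumes "N = 2 * m + 1" and "N \<ge> 3"
  shows "\<exists>\<phi> \<psi> :: nat \<Rightarrow> complex.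
           \<not> (\<exists>c :: complex. cmod c = 1 \<and> (\<forall>j<N. \<psi> j = c * \<phi> j)) \<and>
           (\<forall>k::nat. k \<le> 2 * N - 3 \<longrightarrow>
              cmod (trigP N \<phi> (real k / real (2 * N - 2))) = cmod (trigP N \<psi> (real k / real (2 * N - 2))) \<and>
              norm (vector_derivative (trigP N \<phi>) (at (real k / real (2 * N - 2)))) =
              norm (vector_derivative (trigP N \<psi>) (at (real k / real (2 * N - 2)))))"
proof (intro exI conjI allI impI)
  define M where "M = N - 1"
  have M: "0 < M" "M < N" and samples: "2 * N - 2 = 2 * M"
    using assms by (auto simp: M_def)
  show "\<not> (\<exists>c. cmod c = 1 \<and> (\<forall>j<N. one_plus_monom M (cnj \<i>) j = c * one_plus_monom M \<i> j))"
    using one_plus_monom_not_unimodular_multiple[OF M] by simp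
  fix k :: nat
  have real_sample: "exp (2 * \<i> * of_real pi * of_nat M * of_real (real k / real (2 * M))) =
                      of_real ((-1) ^ k)"
    using exp_at_half_period_multiple[OF M(1)] by simp
  show "cmod (trigP N (one_plus_monom M \<i>) (real k / real (2 * N - 2))) =
        cmod (trigP N (one_plus_monom M (cnj \<i>)) (real k / real (2 * N - 2)))"
    unfolding trigP_one_plus_monom[OF M] samples real_sample by (rule cmod_one_plus_real_cnj)
  show "norm (vector_derivative (trigP N (one_plus_monom M \<i>)) (at (real k / real (2 * N - 2)))) =
        norm (vector_derivative (trigP N (one_plus_monom M (cnj \<i>))) (at (real k / real (2 * N - 2))))"
    unfolding trigP_one_plus_monom[OF M] norm_vector_derivative_one_plus_exp by simp
qed

end
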